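(* Let $\rho\in(0,1)$. If $\mathbf a=(x_1,y_1)\in\mathbb R^2$ satisfies $\mathbf a\neq\mathbf a^*$ and $K(\mathbf a,\mathbf b^* )\le 0$, then $x_1+y_1<0$ and either $x_1^2+y_1^2<2x_2^{*2}$ or $x_1+y_1\le -2x_2^*$.
   Context: Standing setup. Fix $\sigma_x,\sigma_y>0$ and $\rho\in(-1,1)$, and let $(\xi,\eta)$ be a bivariate normal random vector with mean $(0,0)$ and covariance matrix $\Sigma=\begin{pmatrix}\sigma_x^2&\rho\sigma_x\sigma_y\\ \rho\sigma_x\sigma_y&\sigma_y^2\end{pmatrix}$. Player I (the minimizer) chooses $\mathbf a=(x_1,y_1)\in\mathbb R^2$ and Player II (the maximizer) chooses $\mathbf b=(x_2,y_2)\in\mathbb R^2$. Let $C_1(\mathbf a,\mathbf b)=\{(x,y):(x_1-x)^2+(y_1-y)^2<(x_2-x)^2+(y_2-y)^2\}$ and $C_2(\mathbf a,\mathbf b)=\{(x,y):(x_1-x)^2+(y_1-y)^2>(x_2-x)^2+(y_2-y)^2\}$. The payoff to Player II (paid by Player I) is $K(\mathbf a,\mathbf b)=x_1+y_1$ if $\mathbf a=\mathbf b$, and $K(\mathbf a,\mathbf b)=(x_1+y_1)\,P((\xi,\eta)\in C_1(\mathbf a,\mathbf b))+(x_2+y_2)\,P((\xi,\eta)\in C_2(\mathbf a,\mathbf b))$ if $\mathbf a\neq\mathbf b$. For $\mathbf a=(x,y)$ write $-\mathbf a=(-x,-y)$. Let $x_2^*=\frac{\sqrt{2\pi(\sigma_x^2+2\rho\sigma_x\sigma_y+\sigma_y^2)}}{4}$,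 $\mathbf b^*=(x_2^*,x_2^* )$ and $\mathbf a^*=(-x_2^*,-x_2^* )$. *)

theory Defs
  imports "HOL-Probability.Probability"
begin

text \<open>Density of the centred bivariate normal law with standard deviations sx, sy and
  correlation r (covariance matrix [[sx^2, r sx sy],[r sx sy, sy^2]]).\<close>
definition bvn_pdf :: "real \<Rightarrow> real \<Rightarrow> real \<Rightarrow> real \<times> real \<Rightarrow> real" where
  "bvn_pdf sx sy r p = (case p of (x, y) \<Rightarrow>
     exp (- (x^2 / sx^2 - 2 * r * x * y / (sx * sy) + y^2 / sy^2) / (2 * (1 - r^2)))
     / (2 * pi * sx * sy * sqrt (1 - r^2)))"

definition bvn :: "real \<Rightarrow> real \<Rightarrow> real \<Rightarrow> (real \<times> real) measure" where
  "bvn sx sy r = density lborel (\<lambda>p. ennreal (bvn_pdf sx sy r p))"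

definition C1 :: "real \<times> real \<Rightarrow> real \<times> real \<Rightarrow> (real \<times> real) set" where
  "C1 a b = {(x, y). (fst a - x)^2 + (snd a - y)^2 < (fst b - x)^2 + (snd b - y)^2}"

definition C2 :: "real \<times> real \<Rightarrow> real \<times> real \<Rightarrow> (real \<times> real) set" where
  "C2 a b = {(x, y). (fst a - x)^2 + (snd a - y)^2 > (fst b - x)^2 + (snd b - y)^2}"

text \<open>Payoff to Player II.\<close>
definition K :: "real \<Rightarrow> real \<Rightarrow> real \<Rightarrow> real \<times> real \<Rightarrow> real \<times> real \<Rightarrow> real" where
  "K sx sy r a b = (if a = b then fst a + snd a
     else (fst a + snd a) * measure (bvn sx sy r) (C1 a b)
        + (fst b + snd b) * measure (bvn sx sy r) (C2 a b))"

definition x2star :: "real \<Rightarrow> real \<Rightarrow> real \<Rightarrow> real" where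
  "x2star sx sy r = sqrt (2 * pi * (sx^2 + 2 * r * sx * sy + sy^2)) / 4"

definition bstar :: "real \<Rightarrow> real \<Rightarrow> real \<Rightarrow> real \<times> real" where
  "bstar sx sy r = (x2star sx sy r, x2star sx sy r)"

definition astar :: "real \<Rightarrow> real \<Rightarrow> real \<Rightarrow> real \<times> real" where
  "astar sx sy r = (- x2star sx sy r, - x2star sx sy r)"

end

theory Submission
  imports Defs "HOL-Analysis.Analysis"
begin

text \<open>
  The payoff against \<open>b\<close> mixes the coordinate sums of \<open>a\<close> and \<open>b\<close> with the masses of
  two complementary open half-planes, and the one on the side of \<open>b\<close> contains \<open>b\<close>; since
  the normal density is everywhere positive, that mass is positive, so a non-positive
  payoff against \<open>b*\<close> forces \<open>x1 + y1 < 0\<close>. If moreover \<open>a\<close> is not closer to the origin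
  than \<open>b*\<close>, the half-plane of \<open>a\<close> lies in an open half-plane through the origin and the one
  of \<open>b*\<close> contains the opposite half-plane. The law is centrally symmetric, so both of these
  have the same positive mass \<open>m\<close>, and the payoff is at least \<open>(x1 + y1 + 2 x2*) m\<close>.
\<close>

lemma quadratic_form_ge:
  fixes u v r :: real
  assumes "\<bar>r\<bar> \<le> 1"
  shows "(1 - \<bar>r\<bar>) * (u^2 + v^2) \<le> u^2 - 2 * r * u * v + v^2"
proof -
  have "\<bar>2 * u * v\<bar> \<le> u^2 + v^2"
    using sum_squares_ge_zero[of "u - v" 0] sum_squares_ge_zero[of "u + v" 0]
    by (auto simp: abs_le_iff power2_eq_square algebra_simps)
  then have "\<bar>r\<bar> * \<bar>2 * u * v\<bar> \<le> \<bar>r\<bar> * (u^2 + v^2)" by (rule mult_left_mono) simp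
  moreover have "r * (2 * u * v) \<le> \<bar>r\<bar> * \<bar>2 * u * v\<bar>"
    by (metis abs_ge_self abs_mult)
  ultimately show ?thesis by (simp add: algebra_simps)
qed

lemma gaussian_exponent_ge:
  fixes u v r :: real
  assumes "\<bar>r\<bar> < 1"
  shows "(u^2 + v^2) / 4 \<le> (u^2 - 2 * r * u * v + v^2) / (2 * (1 - r^2))"
proof -
  have "r^2 < 1" using assms by (simp add: abs_square_less_1)
  have "(u^2 + v^2) / 4 * (2 * (1 - \<bar>r\<bar>^2)) = (1 - \<bar>r\<bar>) * (u^2 + v^2) * ((1 + \<bar>r\<bar>) / 2)"
    by (simp add: field_simps power2_eq_square del: abs_mult_self_eq)
  then have "(u^2 + v^2) / 4 * (2 * (1 - r^2)) = (1 - \<bar>r\<bar>) * (u^2 + v^2) * ((1 + \<bar>r\<bar>) / 2)"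
    by simp
  also have "\<dots> \<le> (1 - \<bar>r\<bar>) * (u^2 + v^2)"
    using assms by (intro mult_left_le) auto
  also have "\<dots> \<le> u^2 - 2 * r * u * v + v^2"
    using assms by (intro quadratic_form_ge) simp
  finally show ?thesis
    using \<open>r^2 < 1\<close> by (simp add: le_divide_eq)
qed

lemma bvn_pdf_le_product:
  assumes "sx > 0" "sy > 0" "\<bar>r\<bar> < 1"
  shows "bvn_pdf sx sy r (x, y) \<le>
    exp (- (x^2) / (4 * sx^2)) * exp (- (y^2) / (4 * sy^2)) / (2 * pi * sx * sy * sqrt (1 - r^2))"
proof -
  have "r^2 < 1" using assms by (simp add: abs_square_less_1)
  have "x^2 / (4 * sx^2) + y^2 / (4 * sy^2) = ((x / sx)^2 + (y / sy)^2) / 4"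
    "x^2 / sx^2 - 2 * r * x * y / (sx * sy) + y^2 / sy^2
      = (x / sx)^2 - 2 * r * (x / sx) * (y / sy) + (y / sy)^2"
    by (simp_all add: power_divide)
  then have "x^2 / (4 * sx^2) + y^2 / (4 * sy^2)
      \<le> (x^2 / sx^2 - 2 * r * x * y / (sx * sy) + y^2 / sy^2) / (2 * (1 - r^2))"
    using gaussian_exponent_ge[OF assms(3)] by presburger
  then have "- (x^2 / sx^2 - 2 * r * x * y / (sx * sy) + y^2 / sy^2) / (2 * (1 - r^2))
      \<le> - (x^2) / (4 * sx^2) + - (y^2) / (4 * sy^2)"
    unfolding minus_divide_left[symmetric] by linarith
  then have "exp (- (x^2 / sx^2 - 2 * r * x * y / (sx * sy) + y^2 / sy^2) / (2 * (1 - r^2)))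
      \<le> exp (- (x^2) / (4 * sx^2)) * exp (- (y^2) / (4 * sy^2))"
    by (simp flip: exp_add)
  with assms \<open>r^2 < 1\<close> show ?thesis
    unfolding bvn_pdf_def by (simp add: divide_right_mono)
qed

lemma nn_integral_gaussian_finite:
  fixes s :: real
  assumes "s > 0"
  shows "(\<integral>\<^sup>+x. ennreal (exp (- (x^2) / (4 * s^2))) \<partial>lborel) < \<infinity>"
proof -
  have exp_eq: "exp (- (x^2) / (4 * s^2)) = sqrt (2 * pi * (sqrt 2 * s)^2) * normal_density 0 (sqrt 2 * s) x"
    for x using assms by (simp add: normal_density_def power_mult_distrib)
  have "(\<integral>\<^sup>+x. ennreal (normal_density 0 (sqrt 2 * s) x) \<partial>lborel) = 1"
    using assms by (subst nn_integral_eq_integral) (auto intro: integrable_normal_density)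
  then show ?thesis
    unfolding exp_eq by (simp add: ennreal_mult nn_integral_cmult)
qed

lemma bvn_pdf_pos:
  assumes "sx > 0" "sy > 0" "\<bar>r\<bar> < 1"
  shows "bvn_pdf sx sy r p > 0"
proof -
  have "r^2 < 1" using assms by (simp add: abs_square_less_1)
  then show ?thesis using assms by (auto simp: bvn_pdf_def split: prod.splits)
qed

lemma bvn_pdf_uminus: "bvn_pdf sx sy r (- p) = bvn_pdf sx sy r p"
  by (cases p) (simp add: bvn_pdf_def)

lemma borel_measurable_bvn_pdf[measurable]: "bvn_pdf sx sy r \<in> borel_measurable borel"
proof -
  have "bvn_pdf sx sy r \<in> borel_measurable (borel \<Otimes>\<^sub>M borel)"
    unfolding bvn_pdf_def by measurable
  then show ?thesis by (simp add: borel_prod)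
qed

lemma sets_bvn[simp, measurable_cong]: "sets (bvn sx sy r) = sets borel"
  unfolding bvn_def by simp

lemma emeasure_bvn: "A \<in> sets borel \<Longrightarrow>
    emeasure (bvn sx sy r) A = (\<integral>\<^sup>+p. ennreal (bvn_pdf sx sy r p) * indicator A p \<partial>lborel)"
  unfolding bvn_def by (simp add: emeasure_density)

text \<open>Only finiteness of the law is needed below, not that its total mass is \<open>1\<close>.\<close>

lemma finite_measure_bvn:
  assumes "sx > 0" "sy > 0" "\<bar>r\<bar> < 1"
  shows "finite_measure (bvn sx sy r)"
proof (rule finite_measureI)
  define c where "c = 1 / (2 * pi * sx * sy * sqrt (1 - r^2))"
  define g where "g = (\<lambda>s x::real. exp (- (x^2) / (4 * s^2)))"
  have "r^2 < 1" using assms by (simp add: abs_square_less_1)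
  then have "c \<ge> 0" unfolding c_def using assms by simp
  have [measurable]: "g s \<in> borel_measurable borel" for s
    unfolding g_def by measurable
  have "emeasure (bvn sx sy r) (space (bvn sx sy r)) = (\<integral>\<^sup>+p. ennreal (bvn_pdf sx sy r p) \<partial>lborel)"
    unfolding bvn_def by (simp add: emeasure_density)
  also have "\<dots> \<le> (\<integral>\<^sup>+p. ennreal c * ennreal (g sx (fst p)) * ennreal (g sy (snd p)) \<partial>lborel)"
    using bvn_pdf_le_product[OF assms] \<open>c \<ge> 0\<close>
    by (intro nn_integral_mono) (auto simp: c_def g_def ennreal_leI simp flip: ennreal_mult)
  also have "\<dots> = (\<integral>\<^sup>+x. \<integral>\<^sup>+y. ennreal c * ennreal (g sx x) * ennreal (g sy y) \<partial>lborel \<partial>lborel)"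
    by (simp add: lborel_prod[symmetric] lborel.nn_integral_fst[symmetric])
  also have "\<dots> = ennreal c * (\<integral>\<^sup>+x. ennreal (g sx x) \<partial>lborel) * (\<integral>\<^sup>+y. ennreal (g sy y) \<partial>lborel)"
    by (simp add: nn_integral_cmult nn_integral_multc)
  also have "\<dots> < \<infinity>"
    using nn_integral_gaussian_finite[OF assms(1)] nn_integral_gaussian_finite[OF assms(2)]
    by (simp add: g_def ennreal_mult_less_top)
  finally show "emeasure (bvn sx sy r) (space (bvn sx sy r)) \<noteq> \<infinity>" by simp
qed

lemma emeasure_lborel_open_pos:
  fixes S :: "'a::euclidean_space set"
  assumes "open S" "S \<noteq> {}"
  shows "emeasure lborel S > 0"
proof (rule ccontr)
  assume "\<not> emeasure lborel S > 0"
  then have "S \<in> null_sets lborel"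
    using assms by (auto simp: null_sets_def)
  then have "negligible S"
    by (simp add: negligible_iff_null_sets null_sets_completionI)
  with open_not_negligible[OF assms] show False ..
qed

lemma measure_bvn_open_pos:
  assumes "sx > 0" "sy > 0" "\<bar>r\<bar> < 1" "open U" "U \<noteq> {}"
  shows "measure (bvn sx sy r) U > 0"
proof -
  interpret finite_measure "bvn sx sy r" by (rule finite_measure_bvn[OF assms(1-3)])
  have U: "U \<in> sets borel" using assms(4) by simp
  have "emeasure (bvn sx sy r) U \<noteq> 0"
  proof
    assume "emeasure (bvn sx sy r) U = 0"
    then have "AE p in lborel. ennreal (bvn_pdf sx sy r p) * indicator U p = 0"
      using U by (simp add: emeasure_bvn nn_integral_0_iff_AE)
    then have "AE p in lborel. p \<notin> U"
      using bvn_pdf_pos[OF assms(1-3)]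
      by (auto elim!: eventually_mono simp: indicator_def ennreal_eq_0_iff not_le[symmetric])
    then have "emeasure lborel U = 0"
      using U by (simp add: AE_iff_measurable[OF _ refl])
    with emeasure_lborel_open_pos[OF assms(4,5)] show False by simp
  qed
  then show ?thesis
    using U by (simp add: emeasure_eq_measure zero_less_measure_iff)
qed

lemma distr_lborel_uminus: "distr lborel borel uminus = (lborel :: 'a::euclidean_space measure)"
  using lborel_affine[of "-1" "0::'a"] by (simp add: density_1)

lemma emeasure_bvn_uminus:
  assumes "A \<in> sets borel"
  shows "emeasure (bvn sx sy r) (uminus -` A) = emeasure (bvn sx sy r) A"
proof -
  have "uminus -` A \<in> sets borel"
    using measurable_sets_borel[OF borel_measurable_uminus[OF measurable_ident] assms]
    by simp
  then have "emeasure (bvn sx sy r) (uminus -` A)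
      = (\<integral>\<^sup>+p. ennreal (bvn_pdf sx sy r p) * indicator A (- p) \<partial>lborel)"
    using assms by (simp add: emeasure_bvn indicator_def)
  also have "\<dots> = (\<integral>\<^sup>+p. ennreal (bvn_pdf sx sy r (- p)) * indicator A (- p) \<partial>lborel)"
    by (simp add: bvn_pdf_uminus)
  also have "\<dots> = (\<integral>\<^sup>+p. ennreal (bvn_pdf sx sy r p) * indicator A p \<partial>distr lborel borel uminus)"
    using assms by (subst nn_integral_distr) auto
  also have "\<dots> = emeasure (bvn sx sy r) A"
    using assms by (simp add: distr_lborel_uminus emeasure_bvn)
  finally show ?thesis .
qed

lemma measure_bvn_halfplanes_eq:
  "measure (bvn sx sy r) {p. inner d p < 0} = measure (bvn sx sy r) {p. inner d p > 0}"
proof -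
  have "uminus -` {p. inner d p > 0} = {p. inner d p < (0::real)}"
    by auto
  moreover have "{p. inner d p > 0} \<in> sets borel"
    by (intro borel_open open_Collect_less continuous_intros)
  ultimately show ?thesis
    unfolding measure_def by (metis emeasure_bvn_uminus)
qed

lemma C1_eq_halfplane: "C1 a b = {p. inner (b - a) p < (norm b ^ 2 - norm a ^ 2) / 2}"
  by (cases a, cases b) (auto simp: C1_def norm_Pair power2_eq_square algebra_simps)

lemma C2_eq_halfplane: "C2 a b = {p. inner (b - a) p > (norm b ^ 2 - norm a ^ 2) / 2}"
  by (cases a, cases b) (auto simp: C2_def norm_Pair power2_eq_square algebra_simps)

lemma open_C2: "open (C2 a b)"
  unfolding C2_eq_halfplane by (intro open_Collect_less continuous_intros)

lemma K_nonpos_imp_sum_neg: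
  assumes "sx > 0" "sy > 0" "\<bar>r\<bar> < 1"
    and "fst b + snd b > 0" and "K sx sy r a b \<le> 0"
  shows "fst a + snd a < 0"
proof (rule ccontr)
  assume "\<not> fst a + snd a < 0"
  have "a \<noteq> b" using assms(4,5) by (auto simp: K_def)
  then have "b \<in> C2 a b" by (cases a, cases b) (auto simp: C2_def sum_power2_gt_zero_iff)
  then have "measure (bvn sx sy r) (C2 a b) > 0"
    using measure_bvn_open_pos[OF assms(1-3) open_C2] by blast
  with \<open>\<not> fst a + snd a < 0\<close> assms(4) have "K sx sy r a b > 0"
    using \<open>a \<noteq> b\<close> by (simp add: K_def add_nonneg_pos)
  with assms(5) show False by simp
qed

lemma K_nonpos_imp_sum_le:
  assumes "sx > 0" "sy > 0" "\<bar>r\<bar> < 1"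
    and "fst b + snd b > 0" and "K sx sy r a b \<le> 0" and "norm b \<le> norm a"
  shows "fst a + snd a \<le> - (fst b + snd b)"
proof (rule ccontr)
  define s where "s = fst a + snd a"
  assume "\<not> fst a + snd a \<le> - (fst b + snd b)"
  then have "s + (fst b + snd b) > 0" by (simp add: s_def)
  interpret finite_measure "bvn sx sy r" by (rule finite_measure_bvn[OF assms(1-3)])
  define H where "H = {p. inner (b - a) p > (0::real)}"
  define m where "m = measure (bvn sx sy r) H"
  have "s < 0" unfolding s_def by (rule K_nonpos_imp_sum_neg[OF assms(1-5)])
  have "a \<noteq> b" using assms(4,5) by (auto simp: K_def)
  have "open H"
    unfolding H_def by (intro open_Collect_less continuous_intros)
  have "b - a \<in> H" using \<open>a \<noteq> b\<close> by (simp add: H_def)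
  then have "m > 0"
    unfolding m_def using measure_bvn_open_pos[OF assms(1-3) \<open>open H\<close>] by blast
  have "norm b ^ 2 \<le> norm a ^ 2" using assms(6) by (simp add: power_mono)
  then have C1_sub: "C1 a b \<subseteq> {p. inner (b - a) p < 0}" and C2_sup: "H \<subseteq> C2 a b"
    unfolding C1_eq_halfplane C2_eq_halfplane H_def by (auto simp del: power_mono_iff)
  have "{p. inner (b - a) p < 0} \<in> sets borel"
    by (intro borel_open open_Collect_less continuous_intros)
  with C1_sub have "measure (bvn sx sy r) (C1 a b) \<le> measure (bvn sx sy r) {p. inner (b - a) p < 0}"
    by (intro finite_measure_mono) simp_all
  also have "\<dots> = m"
    unfolding m_def H_def by (rule measure_bvn_halfplanes_eq)
  finally have "measure (bvn sx sy r) (C1 a b) \<le> m" .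
  moreover have "m \<le> measure (bvn sx sy r) (C2 a b)"
    unfolding m_def using C2_sup open_C2[of a b] by (intro finite_measure_mono) simp_all
  ultimately have "s * m + (fst b + snd b) * m
      \<le> s * measure (bvn sx sy r) (C1 a b) + (fst b + snd b) * measure (bvn sx sy r) (C2 a b)"
    using \<open>s < 0\<close> assms(4) by (intro add_mono mult_left_mono_neg mult_left_mono) simp_all
  then have "(s + (fst b + snd b)) * m \<le> K sx sy r a b"
    using \<open>a \<noteq> b\<close> by (simp add: K_def s_def distrib_right)
  moreover have "(s + (fst b + snd b)) * m > 0"
    using \<open>s + (fst b + snd b) > 0\<close> \<open>m > 0\<close> by simp
  ultimately show False using assms(5) by linarith
qed

theorem mainTheorem9:
  fixes sx sy r x1 y1 :: real
  assumes "sx > 0" and "sy > 0" and "0 < r" and "r < 1"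
    and "(x1, y1) \<noteq> astar sx sy r"
    and "K sx sy r (x1, y1) (bstar sx sy r) \<le> 0"
  shows "x1 + y1 < 0 \<and>
    (x1^2 + y1^2 < 2 * (x2star sx sy r)^2 \<or> x1 + y1 \<le> - 2 * x2star sx sy r)"
proof -
  define c where "c = x2star sx sy r"
  have "\<bar>r\<bar> < 1" using assms(3,4) by simp
  have "c > 0"
    using assms(1-3) by (simp add: c_def x2star_def add_pos_pos)
  then have sum_bstar: "fst (bstar sx sy r) + snd (bstar sx sy r) = 2 * c"
    and "fst (bstar sx sy r) + snd (bstar sx sy r) > 0"
    by (simp_all add: bstar_def c_def)
  have "x1 + y1 < 0"
    using K_nonpos_imp_sum_neg[OF assms(1,2) \<open>\<bar>r\<bar> < 1\<close> \<open>0 < fst _ + snd _\<close> assms(6)] by simp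
  moreover have "x1 + y1 \<le> - 2 * c" if "\<not> x1^2 + y1^2 < 2 * c^2"
  proof -
    have "norm (bstar sx sy r) \<le> norm (x1, y1)"
      using that by (simp add: bstar_def c_def norm_Pair power2_eq_square)
    from K_nonpos_imp_sum_le[OF assms(1,2) \<open>\<bar>r\<bar> < 1\<close> \<open>0 < fst _ + snd _\<close> assms(6) this]
    show ?thesis by (simp add: sum_bstar)
  qed
  ultimately show ?thesis unfolding c_def by linarith
qed

end
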